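(* Let $G$ be a finite abstract simplicial complex such that all unit spheres $S(x)$, $x\in G$, have the same Euler characteristic $w(S(x))=c$. Then either $w(G)=0$ or $w(S(x))=0$ for all $x \in G$.
   Context: A finite abstract simplicial complex $G$ is a finite set of non-empty finite sets closed under taking non-empty subsets. For $x\in G$, $w(x)=(-1)^{|x|-1}$, and for $A\subset G$, $w(A)=\sum_{y\in A}w(y)$ (Euler characteristic). For $x\in G$: $U(x)=\{y\in G: x\subset y\}$, $B(x)=\{y\in G : y\subset z \text{ for some } z\in U(x)\}$ (the closure of $U(x)$ in the topology with basis the sets $U(x)$), and the unit sphere $S(x)=B(x)\setminus U(x)$. *)

theory Defs
  imports Main
begin

definition simplicial_complex :: "'a set set \<Rightarrow> bool" where
  "simplicial_complex G \<longleftrightarrow> finite G \<and>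
     (\<forall>x\<in>G. x \<noteq> {} \<and> finite x \<and> (\<forall>y. y \<noteq> {} \<and> y \<subseteq> x \<longrightarrow> y \<in> G))"

definition w :: "'a set \<Rightarrow> int" where
  "w x = (-1) ^ (card x - 1)"

definition euler_char :: "'a set set \<Rightarrow> int" where
  "euler_char A = (\<Sum>y\<in>A. w y)"

definition star :: "'a set set \<Rightarrow> 'a set \<Rightarrow> 'a set set" where
  "star G x = {y \<in> G. x \<subseteq> y}"

definition closed_star :: "'a set set \<Rightarrow> 'a set \<Rightarrow> 'a set set" where
  "closed_star G x = {y \<in> G. \<exists>z\<in>star G x. y \<subseteq> z}"

definition unit_sphere :: "'a set set \<Rightarrow> 'a set \<Rightarrow> 'a set set" where
  "unit_sphere G x = closed_star G x - star G x"

end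

theory Submission
  imports Defs
begin

text \<open>
  The closed star \<open>B(x)\<close> is a cone with apex any vertex of \<open>x\<close>, so \<open>w(B(x)) = 1\<close> and
  hence \<open>w(S(x)) = 1 - w(U(x))\<close>. Counting pairs of faces \<open>x \<subseteq> y\<close> with weight \<open>w(x) w(y)\<close>
  in two ways gives \<open>\<Sum>\<^sub>x w(x) w(U(x)) = w(G)\<close>, since the nonempty faces of a simplex have
  Euler characteristic 1. If all \<open>w(S(x)) = c\<close>, then \<open>w(G) = (1 - c) w(G)\<close>, i.e. \<open>c w(G) = 0\<close>.
\<close>

lemma simplicial_complexD:
  assumes "simplicial_complex G"
  shows "finite G"
    and "y \<in> G \<Longrightarrow> y \<noteq> {}"
    and "y \<in> G \<Longrightarrow> finite y"
    and "z \<in> G \<Longrightarrow> y \<noteq> {} \<Longrightarrow> y \<subseteq> z \<Longrightarrow> y \<in> G"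
  using assms unfolding simplicial_complex_def by blast+

lemma w_eq_neg_power_card:
  assumes "finite y" "y \<noteq> {}"
  shows "w y = - ((-1) ^ card y)"
  using assms unfolding w_def
  by (metis card_gt_0_iff Suc_diff_1 mult_minus1 power_Suc minus_minus)

text \<open>Toggling \<open>v\<close> is an involution of \<open>C\<close> that flips the parity of the cardinality.\<close>

lemma sum_neg_one_power_card_toggle_closed:
  assumes "finite C" "\<And>y. y \<in> C \<Longrightarrow> finite y"
    and "\<And>y. y \<in> C \<Longrightarrow> insert v y \<in> C" "\<And>y. y \<in> C \<Longrightarrow> y - {v} \<in> C"
  shows "(\<Sum>y\<in>C. (-1::int) ^ card y) = 0"
proof -
  define toggle where "toggle y = (if v \<in> y then y - {v} else insert v y)" for y
  have toggle_in: "toggle y \<in> C" if "y \<in> C" for y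
    using assms(3,4) that unfolding toggle_def by simp
  have toggle_toggle: "toggle (toggle y) = y" for y
    unfolding toggle_def by auto
  have flip: "(-1::int) ^ card (toggle y) = - ((-1) ^ card y)" if "y \<in> C" for y
    using assms(2)[OF that] unfolding toggle_def
    by (cases "v \<in> y") (auto simp: card_Suc_Diff1[symmetric] simp del: card_Diff_insert)
  have "(\<Sum>y\<in>C. (-1::int) ^ card y) = (\<Sum>y\<in>C. (-1) ^ card (toggle y))"
    by (rule sum.reindex_bij_witness[of _ toggle toggle]) (auto simp: toggle_in toggle_toggle)
  also have "\<dots> = - (\<Sum>y\<in>C. (-1) ^ card y)"
    by (simp add: flip sum_negf)
  finally show ?thesis by simp
qed

lemma euler_char_cone:
  assumes "finite C" "\<And>y. y \<in> C \<Longrightarrow> finite y" "{} \<in> C"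
    and "\<And>y. y \<in> C \<Longrightarrow> insert v y \<in> C" "\<And>y. y \<in> C \<Longrightarrow> y - {v} \<in> C"
  shows "euler_char (C - {{}}) = 1"
proof -
  have "euler_char (C - {{}}) = (\<Sum>y\<in>C - {{}}. - ((-1) ^ card y))"
    unfolding euler_char_def by (rule sum.cong) (auto intro: w_eq_neg_power_card assms(2))
  also have "\<dots> = 1 - (\<Sum>y\<in>C. (-1) ^ card y)"
    using assms(1,3) by (simp add: sum_negf sum_diff1)
  also have "\<dots> = 1"
    using sum_neg_one_power_card_toggle_closed[OF assms(1,2,4,5)] by simp
  finally show ?thesis .
qed

lemma euler_char_simplex:
  assumes "finite y" "y \<noteq> {}"
  shows "euler_char (Pow y - {{}}) = 1"
proof -
  obtain v where "v \<in> y" using assms(2) by blast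
  then show ?thesis
    using assms(1) by (intro euler_char_cone[where v = v]) (auto intro: finite_subset)
qed

lemma closed_star_eq:
  assumes "simplicial_complex G" "x \<in> G"
  shows "closed_star G x = {y. x \<union> y \<in> G} - {{}}"
proof
  show "closed_star G x \<subseteq> {y. x \<union> y \<in> G} - {{}}"
  proof
    fix y assume "y \<in> closed_star G x"
    then obtain z where "z \<in> G" "x \<subseteq> z" "y \<subseteq> z" "y \<in> G"
      unfolding closed_star_def star_def by blast
    then have "x \<union> y \<in> G" "y \<noteq> {}"
      using simplicial_complexD(2,4)[OF assms(1)] assms(2) by (blast, blast)
    then show "y \<in> {y. x \<union> y \<in> G} - {{}}" by blast
  qed
  show "{y. x \<union> y \<in> G} - {{}} \<subseteq> closed_star G x"
    unfolding closed_star_def star_def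
    using simplicial_complexD(4)[OF assms(1)] by blast
qed

lemma euler_char_closed_star:
  assumes G: "simplicial_complex G" and x: "x \<in> G"
  shows "euler_char (closed_star G x) = 1"
proof -
  obtain v where v: "v \<in> x"
    using simplicial_complexD(2)[OF G x] by blast
  have "{y. x \<union> y \<in> G} \<subseteq> Pow (\<Union>G)" by blast
  moreover have "finite (Pow (\<Union>G))"
    using simplicial_complexD(1,3)[OF G] by simp
  ultimately have "finite {y. x \<union> y \<in> G}" by (rule finite_subset)
  moreover have "finite y" if "x \<union> y \<in> G" for y
    using simplicial_complexD(3)[OF G that] by simp
  moreover have "x \<union> insert v y = x \<union> y" "x \<union> (y - {v}) = x \<union> y" for y
    using v by auto
  ultimately show ?thesis
    unfolding closed_star_eq[OF G x] using x by (intro euler_char_cone[where v = v]) auto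
qed

lemma euler_char_unit_sphere:
  assumes G: "simplicial_complex G" and x: "x \<in> G"
  shows "euler_char (unit_sphere G x) = 1 - euler_char (star G x)"
proof -
  have "finite (closed_star G x)"
    using simplicial_complexD(1)[OF G] unfolding closed_star_def by simp
  moreover have "star G x \<subseteq> closed_star G x"
    unfolding star_def closed_star_def by auto
  ultimately have "euler_char (unit_sphere G x) = euler_char (closed_star G x) - euler_char (star G x)"
    unfolding unit_sphere_def euler_char_def by (rule sum_diff)
  then show ?thesis
    using euler_char_closed_star[OF G x] by simp
qed

lemma faces_below_eq:
  assumes "simplicial_complex G" "y \<in> G"
  shows "{x \<in> G. x \<subseteq> y} = Pow y - {{}}"
  using simplicial_complexD[OF assms(1)] assms(2) by blast

lemma sum_w_mult_euler_char_star:
  assumes G: "simplicial_complex G"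
  shows "(\<Sum>x\<in>G. w x * euler_char (star G x)) = euler_char G"
proof -
  have finG: "finite G"
    using G by (rule simplicial_complexD(1))
  have "(\<Sum>x\<in>G. w x * euler_char (star G x)) = (\<Sum>x\<in>G. \<Sum>y\<in>{y\<in>G. x \<subseteq> y}. w x * w y)"
    unfolding euler_char_def star_def by (simp add: sum_distrib_left)
  also have "\<dots> = (\<Sum>y\<in>G. \<Sum>x\<in>{x\<in>G. x \<subseteq> y}. w x * w y)"
    using finG finG by (rule sum.swap_restrict)
  also have "\<dots> = (\<Sum>y\<in>G. euler_char (Pow y - {{}}) * w y)"
    unfolding euler_char_def by (simp add: faces_below_eq[OF G] sum_distrib_right)
  also have "\<dots> = (\<Sum>y\<in>G. w y)"
    by (rule sum.cong) (simp_all add: euler_char_simplex simplicial_complexD(2,3)[OF G])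
  finally show ?thesis
    unfolding euler_char_def .
qed

theorem mainTheorem6:
  fixes G :: "'a set set" and c :: int
  assumes "simplicial_complex G"
    and "\<forall>x\<in>G. euler_char (unit_sphere G x) = c"
  shows "euler_char G = 0 \<or> (\<forall>x\<in>G. euler_char (unit_sphere G x) = 0)"
proof -
  have "euler_char G = (\<Sum>x\<in>G. w x * euler_char (star G x))"
    using sum_w_mult_euler_char_star[OF assms(1)] by simp
  also have "\<dots> = (\<Sum>x\<in>G. w x * (1 - c))"
    using assms euler_char_unit_sphere by (intro sum.cong) fastforce+
  also have "\<dots> = (1 - c) * euler_char G"
    unfolding euler_char_def by (simp add: sum_distrib_left mult.commute)
  finally have "c * euler_char G = 0"
    by (simp add: algebra_simps)
  then show ?thesis
    using assms(2) by auto
qed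

end
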